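(* Let $G=\langle A\cup B\rangle$ be a CS group with periodic rooted group $A$, and assume that either (i) $A$ has finite exponent, or (ii) the directed group $B$ has finite support. Let $T\subseteq G$ be a set of elements of finite order. Suppose that for every $g\in G\setminus A$ there is some $m\in\mathbb N$ such that for all $v\in X^m$ (for which $\ell_g(v)$ is then finite) we have $\mathrm{syl}(g\|_v)<\mathrm{syl}(g)$ or $g\|_v\in T$. Then $G$ is periodic.
   Context: Let $X$ be a nonempty set (possibly infinite) with a distinguished letter $0\in X$, and $\dot X=X\setminus\{0\}$. $X^*$ is the free monoid on $X$ (concatenation $u\star v$), viewed as a regular rooted tree with layers $X^n$. $\mathrm{Aut}(X^* )$ is the group of root-fixing tree automorphisms, acting on the right ($gh$ = first $g$ then $h$); ${}^hg=hgh^{-1}$. The section $g|_u$ is defined by $(u\star v).g=u.g\star v.(g|_u)$; elements of $\mathrm{Sym}(X)$ are identified with rooted automorphisms $(x\star v).\rho=x.\rho\star v$; $\mathrm{St}(1)$ is the stabiliser of all vertices of $X^1$. For a vertex $v$, $\ell_g(v)$ is the length of its $\langle g\rangle$-orbit; if finite, $g\|_v:=g^{\ell_g(v)}|_v$. A constant spinal (CS) group is $G=\langle A\cup B\rangle$ with $A\le\mathrm{Sym}(X)$ transitive (rooted group) and $B\le\mathrm{St}(1)$ (directed group) such that $b|_0=b$ for all $b\in B$ and the elements $b|_x$ ($b\in B$, $x\in\dot X$) lie in $A$ and generate $A$. $B$ has finite support if each $b\in B$ has $b|_x=\mathrm{id}$ for all but finitely many $x$. Every $g\in G$ is a product $({}^{a_0}b_0)\cdots({}^{a_{n-1}}b_{n-1})a_n$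 ($a_i\in A$, $b_i\in B$); $\mathrm{syl}(g)$ is the least such $n$. A group is periodic if every element has finite order. *)

theory Defs
  imports "HOL-Algebra.Algebra"
begin

text \<open>Vertices of the tree X^* are lists over the alphabet type 'x; the empty list is the root,
  concatenation is the monoid operation. We apply automorphisms as functions, so "v.g" is "g v"; the
  product gh (first g, then h) is the composition h o g.\<close>

definition tree_aut :: "('x list \<Rightarrow> 'x list) set" where
  "tree_aut = {g. bij g \<and> (\<forall>w. length (g w) = length w) \<and>
                  (\<forall>u v. take (length u) (g (u @ v)) = g u)}"

definition AutT :: "('x list \<Rightarrow> 'x list) monoid" where
  "AutT = \<lparr>carrier = tree_aut, monoid.mult = (\<lambda>g h. h \<circ> g), one = id\<rparr>"

text \<open>Section g|_u, defined by (u v).g = (u.g)(v.(g|_u)).\<close>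
definition sect :: "('x list \<Rightarrow> 'x list) \<Rightarrow> 'x list \<Rightarrow> ('x list \<Rightarrow> 'x list)" where
  "sect g u = (\<lambda>v. drop (length u) (g (u @ v)))"

definition rooted :: "('x \<Rightarrow> 'x) \<Rightarrow> ('x list \<Rightarrow> 'x list)" where
  "rooted \<rho> = (\<lambda>w. case w of [] \<Rightarrow> [] | x # v \<Rightarrow> \<rho> x # v)"

definition St1 :: "('x list \<Rightarrow> 'x list) set" where
  "St1 = {g \<in> tree_aut. \<forall>x. g [x] = [x]}"

text \<open>Constant spinal group data: rooted group A, directed group B, distinguished letter z (= 0).\<close>
definition CS_data :: "'x \<Rightarrow> ('x list \<Rightarrow> 'x list) set \<Rightarrow> ('x list \<Rightarrow> 'x list) set \<Rightarrow> bool" where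
  "CS_data z A B \<longleftrightarrow>
     subgroup A AutT \<and> (\<forall>a\<in>A. \<exists>\<rho>. bij \<rho> \<and> a = rooted \<rho>) \<and>
     (\<forall>x y. \<exists>a\<in>A. a [x] = [y]) \<and>
     subgroup B AutT \<and> B \<subseteq> St1 \<and>
     (\<forall>b\<in>B. sect b [z] = b) \<and>
     (\<forall>b\<in>B. \<forall>x. x \<noteq> z \<longrightarrow> sect b [x] \<in> A) \<and>
     generate AutT {sect b [x] | b x. b \<in> B \<and> x \<noteq> z} = A"

definition CS_group :: "('x list \<Rightarrow> 'x list) set \<Rightarrow> ('x list \<Rightarrow> 'x list) set \<Rightarrow> ('x list \<Rightarrow> 'x list) set" where
  "CS_group A B = generate AutT (A \<union> B)"

definition finite_order :: "('x list \<Rightarrow> 'x list) \<Rightarrow> bool" where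
  "finite_order g \<longleftrightarrow> (\<exists>n::nat. n > 0 \<and> g [^]\<^bsub>AutT\<^esub> n = \<one>\<^bsub>AutT\<^esub>)"

definition periodic :: "('x list \<Rightarrow> 'x list) set \<Rightarrow> bool" where
  "periodic H \<longleftrightarrow> (\<forall>g\<in>H. finite_order g)"

definition finite_exponent :: "('x list \<Rightarrow> 'x list) set \<Rightarrow> bool" where
  "finite_exponent H \<longleftrightarrow> (\<exists>n::nat. n > 0 \<and> (\<forall>g\<in>H. g [^]\<^bsub>AutT\<^esub> n = \<one>\<^bsub>AutT\<^esub>))"

definition finite_support :: "'x \<Rightarrow> ('x list \<Rightarrow> 'x list) set \<Rightarrow> bool" where
  "finite_support z B \<longleftrightarrow> (\<forall>b\<in>B. finite {x. sect b [x] \<noteq> id})"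

definition conjT :: "('x list \<Rightarrow> 'x list) \<Rightarrow> ('x list \<Rightarrow> 'x list) \<Rightarrow> ('x list \<Rightarrow> 'x list)" where
  "conjT h g = h \<otimes>\<^bsub>AutT\<^esub> g \<otimes>\<^bsub>AutT\<^esub> inv\<^bsub>AutT\<^esub> h"

definition prodT :: "('x list \<Rightarrow> 'x list) list \<Rightarrow> ('x list \<Rightarrow> 'x list)" where
  "prodT gs = foldr (\<lambda>g acc. g \<otimes>\<^bsub>AutT\<^esub> acc) gs \<one>\<^bsub>AutT\<^esub>"

definition syl :: "('x list \<Rightarrow> 'x list) set \<Rightarrow> ('x list \<Rightarrow> 'x list) set \<Rightarrow> ('x list \<Rightarrow> 'x list) \<Rightarrow> nat" where
  "syl A B g = (LEAST n. \<exists>as bs a. length as = n \<and> length bs = n \<and> set as \<subseteq> A \<and> set bs \<subseteq> B \<and>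
        a \<in> A \<and> g = prodT (map (\<lambda>(a', b'). conjT a' b') (zip as bs)) \<otimes>\<^bsub>AutT\<^esub> a)"

definition orbitT :: "('x list \<Rightarrow> 'x list) \<Rightarrow> 'x list \<Rightarrow> 'x list set" where
  "orbitT g v = {(g [^]\<^bsub>AutT\<^esub> (k::int)) v | k. True}"

definition orbit_len :: "('x list \<Rightarrow> 'x list) \<Rightarrow> 'x list \<Rightarrow> nat" where
  "orbit_len g v = card (orbitT g v)"

definition first_return_section :: "('x list \<Rightarrow> 'x list) \<Rightarrow> 'x list \<Rightarrow> ('x list \<Rightarrow> 'x list)" where
  "first_return_section g v = sect (g [^]\<^bsub>AutT\<^esub> (orbit_len g v)) v"

end

theory Submission
  imports Defs "HOL-Combinatorics.Orbits"
begin

text \<open>Let H be A if A has finite exponent, and the trivial group if B has finite support. Then H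
  has some finite exponent e, and for every g in G and every level m, all but finitely many
  sections of g at level m lie in H: this holds for the generators and survives products and
  inverses. Since G acts on the first level through the periodic group A, an induction on m shows
  that some power g^n fixes every vertex of length at most m. At level m, the subtree below a vertex
  v whose section of g^n lies in H is then fixed by g^(ne); below each of the finitely many other
  vertices, g^(l_g(v)) acts as g||_v. Hence g has finite order as soon as all g||_v at level m do,
  and induction on the syllable length, using the hypothesis on g||_v and T, proves the theorem.\<close>

section \<open>Tree automorphisms and their sections\<close>

lemma tree_aut_length: "g \<in> tree_aut \<Longrightarrow> length (g w) = length w"
  by (simp add: tree_aut_def)

lemma tree_aut_take: "g \<in> tree_aut \<Longrightarrow> take (length u) (g (u @ v)) = g u"
  by (simp add: tree_aut_def)

lemma tree_aut_bij: "g \<in> tree_aut \<Longrightarrow> bij g"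
  by (simp add: tree_aut_def)

lemma tree_aut_append: "g \<in> tree_aut \<Longrightarrow> g (u @ v) = g u @ sect g u v"
  unfolding sect_def by (metis append_take_drop_id tree_aut_take)

lemma tree_aut_Nil: "g \<in> tree_aut \<Longrightarrow> g [] = []"
  using tree_aut_length[of g "[]"] by simp

lemma id_tree_aut: "id \<in> tree_aut"
  by (simp add: tree_aut_def)

lemma comp_tree_aut:
  assumes "g \<in> tree_aut" "h \<in> tree_aut"
  shows "h \<circ> g \<in> tree_aut"
proof -
  have "take (length u) (h (g (u @ v))) = h (g u)" for u v
  proof -
    have "h (g (u @ v)) = h (g u) @ sect h (g u) (sect g u v)"
      using assms tree_aut_append by metis
    moreover have "length (h (g u)) = length u"
      using assms tree_aut_length by metis
    ultimately show ?thesis by simp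
  qed
  thus ?thesis using assms unfolding tree_aut_def by (auto intro: bij_comp)
qed

lemma inv_into_tree_aut:
  assumes g: "g \<in> tree_aut"
  shows "inv_into UNIV g \<in> tree_aut"
proof -
  have b: "bij g" using g tree_aut_bij by blast
  have length_inv: "length (inv_into UNIV g w) = length w" for w
    by (metis g b bij_inv_eq_iff tree_aut_length)
  have "take (length u) (inv_into UNIV g (u @ v)) = inv_into UNIV g u" for u v
  proof -
    define w where "w = inv_into UNIV g (u @ v)"
    have "g w = u @ v" unfolding w_def by (meson b bij_inv_eq_iff)
    moreover have "length w = length u + length v" using length_inv w_def by simp
    ultimately have "g (take (length u) w) = u"
      using tree_aut_take[OF g, of "take (length u) w" "drop (length u) w"] by simp
    thus ?thesis unfolding w_def[symmetric] by (metis b bij_inv_eq_iff)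
  qed
  thus ?thesis using length_inv b unfolding tree_aut_def by (auto intro: bij_imp_bij_inv)
qed

lemma funpow_tree_aut: "g \<in> tree_aut \<Longrightarrow> g ^^ n \<in> tree_aut"
  by (induction n) (simp_all add: id_tree_aut comp_tree_aut)

lemma carrier_AutT [simp]: "carrier AutT = tree_aut"
  by (simp add: AutT_def)

lemma mult_AutT [simp]: "g \<otimes>\<^bsub>AutT\<^esub> h = h \<circ> g"
  by (simp add: AutT_def)

lemma one_AutT [simp]: "\<one>\<^bsub>AutT\<^esub> = id"
  by (simp add: AutT_def)

lemma nat_pow_AutT: "g [^]\<^bsub>AutT\<^esub> (n::nat) = g ^^ n"
  by (induction n) (simp_all add: nat_pow_def funpow_Suc_right[symmetric])

lemma comp_inv_into_tree_aut: "g \<in> tree_aut \<Longrightarrow> g \<circ> inv_into UNIV g = id"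
  by (simp add: fun_eq_iff bij_is_surj surj_f_inv_f tree_aut_bij)

lemma group_AutT: "group AutT"
proof (rule groupI)
  fix g assume "g \<in> carrier AutT"
  thus "\<exists>h\<in>carrier AutT. h \<otimes>\<^bsub>AutT\<^esub> g = \<one>\<^bsub>AutT\<^esub>"
    using comp_inv_into_tree_aut inv_into_tree_aut by (intro bexI[of _ "inv_into UNIV g"]) auto
qed (auto simp: comp_tree_aut id_tree_aut comp_assoc)

lemma inv_AutT: "g \<in> tree_aut \<Longrightarrow> inv\<^bsub>AutT\<^esub> g = inv_into UNIV g"
  using group.inv_equality[OF group_AutT, of "inv_into UNIV g" g]
  by (simp add: comp_inv_into_tree_aut inv_into_tree_aut)

lemma sect_Nil [simp]: "sect g [] = g"
  by (simp add: sect_def)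

lemma sect_id [simp]: "sect id u = id"
  by (simp add: sect_def fun_eq_iff)

lemma sect_append: "sect g (u @ w) = sect (sect g u) w"
  by (simp add: sect_def fun_eq_iff add.commute)

lemma sect_comp:
  assumes "g \<in> tree_aut" "h \<in> tree_aut"
  shows "sect (h \<circ> g) u = sect h (g u) \<circ> sect g u"
proof
  fix v
  have "h (g (u @ v)) = h (g u) @ sect h (g u) (sect g u v)"
    using assms tree_aut_append by metis
  thus "sect (h \<circ> g) u v = (sect h (g u) \<circ> sect g u) v"
    using assms tree_aut_length[of h "g u"] tree_aut_length[of g u]
    by (simp add: sect_def[of "h \<circ> g"])
qed

lemma sect_append_right:
  assumes g: "g \<in> tree_aut"
  shows "sect g u (w @ v) = sect g u w @ sect g (u @ w) v"
proof -
  have g_uwv: "g (u @ w @ v) = g u @ sect g u w @ sect g (u @ w) v"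
    using tree_aut_append[OF g, of u w] tree_aut_append[OF g, of "u @ w" v] by simp
  have "sect g u (w @ v) = drop (length u) (g (u @ w @ v))"
    by (simp add: sect_def)
  also have "\<dots> = sect g u w @ sect g (u @ w) v"
    unfolding g_uwv using tree_aut_length[OF g, of u] by simp
  finally show ?thesis .
qed

lemma sect_tree_aut:
  assumes g: "g \<in> tree_aut"
  shows "sect g u \<in> tree_aut"
proof -
  let ?g' = "inv_into UNIV g"
  have g'g: "?g' \<circ> g = id" and g'_u: "?g' (g u) = u"
    using tree_aut_bij[OF g] by (simp_all add: bij_is_inj)
  have "sect ?g' (g u) \<circ> sect g u = id"
    using sect_comp[OF g inv_into_tree_aut[OF g], of u] g'g by simp
  moreover have "sect g u \<circ> sect ?g' (g u) = id"
    using sect_comp[OF inv_into_tree_aut[OF g] g, of "g u"] comp_inv_into_tree_aut[OF g] g'_u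
    by simp
  ultimately have "bij (sect g u)" by (rule o_bij)
  moreover have length_sect: "length (sect g u v) = length v" for v
    using tree_aut_length[OF g, of "u @ v"] by (simp add: sect_def)
  ultimately show ?thesis
    using sect_append_right[OF g] unfolding tree_aut_def by simp
qed

lemma sect_inv_into:
  assumes g: "g \<in> tree_aut"
  shows "sect (inv_into UNIV g) u = inv_into UNIV (sect g (inv_into UNIV g u))"
proof -
  let ?s = "sect g (inv_into UNIV g u)" and ?t = "sect (inv_into UNIV g) u"
  have st: "?s \<circ> ?t = id"
    using sect_comp[OF inv_into_tree_aut[OF g] g, of u] comp_inv_into_tree_aut[OF g] by simp
  have "bij ?s" using sect_tree_aut[OF g] tree_aut_bij by blast
  hence "inv_into UNIV ?s \<circ> ?s = id" using bij_is_inj inv_o_cancel by blast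
  hence "?t = (inv_into UNIV ?s \<circ> ?s) \<circ> ?t" by simp
  thus ?thesis using st by (simp add: comp_assoc)
qed

lemma funpow_fixed: "f x = x \<Longrightarrow> (f ^^ n) x = x"
  by (induction n) simp_all

lemma sect_funpow_fixed:
  assumes g: "g \<in> tree_aut" and u: "g u = u"
  shows "sect (g ^^ n) u = sect g u ^^ n"
proof (induction n)
  case (Suc n)
  have "sect (g ^^ Suc n) u = sect (g \<circ> g ^^ n) u" by simp
  also have "\<dots> = sect g ((g ^^ n) u) \<circ> sect (g ^^ n) u"
    using sect_comp[OF funpow_tree_aut[OF g] g] .
  also have "\<dots> = sect g u ^^ Suc n"
    using Suc funpow_fixed[of g u, OF u] by (simp add: funpow_Suc_right)
  finally show ?case .
qed (simp add: sect_def fun_eq_iff)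

lemma funpow_fixed_append:
  assumes g: "g \<in> tree_aut" and u: "g u = u"
  shows "(g ^^ n) (u @ w) = u @ (sect g u ^^ n) w"
  using tree_aut_append[OF funpow_tree_aut[OF g], of n u w] sect_funpow_fixed[OF g u]
    funpow_fixed[of g u, OF u] by simp

lemma rooted_sect_Cons: "sect (rooted \<rho>) (x # u) = id"
  by (simp add: sect_def rooted_def fun_eq_iff)

section \<open>Periodic points\<close>

definition periodic_on :: "('a \<Rightarrow> 'a) \<Rightarrow> 'a set \<Rightarrow> bool" where
  "periodic_on f S \<longleftrightarrow> (\<exists>n>0. \<forall>x\<in>S. (f ^^ n) x = x)"

lemma periodic_onI: "n > 0 \<Longrightarrow> (\<And>x. x \<in> S \<Longrightarrow> (f ^^ n) x = x) \<Longrightarrow> periodic_on f S"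
  unfolding periodic_on_def by blast

lemma periodic_onE:
  assumes "periodic_on f S"
  obtains n where "n > 0" "\<And>x. x \<in> S \<Longrightarrow> (f ^^ n) x = x"
  using assms unfolding periodic_on_def by blast

lemma funpow_mult_fixed: "(f ^^ n) x = x \<Longrightarrow> (f ^^ (n * k)) x = x"
  by (metis funpow_fixed funpow_mult)

lemma periodic_on_subset: "periodic_on f T \<Longrightarrow> S \<subseteq> T \<Longrightarrow> periodic_on f S"
  unfolding periodic_on_def by blast

lemma periodic_on_Un:
  assumes "periodic_on f S" "periodic_on f T"
  shows "periodic_on f (S \<union> T)"
proof -
  obtain m n where "m > 0" "n > 0" and S: "\<And>x. x \<in> S \<Longrightarrow> (f ^^ m) x = x"
    and T: "\<And>x. x \<in> T \<Longrightarrow> (f ^^ n) x = x"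
    using assms unfolding periodic_on_def by blast
  moreover have "(f ^^ (m * n)) x = x" if "x \<in> S \<union> T" for x
    using that funpow_mult_fixed[OF S, of x n] funpow_mult_fixed[OF T, of x m]
    by (auto simp: mult.commute)
  ultimately show ?thesis by (intro periodic_onI[of "m * n"]) auto
qed

lemma periodic_on_UN:
  "finite I \<Longrightarrow> (\<And>i. i \<in> I \<Longrightarrow> periodic_on f (S i)) \<Longrightarrow> periodic_on f (\<Union>i\<in>I. S i)"
proof (induction I rule: finite_induct)
  case empty
  show ?case by (intro periodic_onI[of 1]) auto
qed (simp add: periodic_on_Un)

lemma periodic_on_funpow:
  assumes "periodic_on (f ^^ p) S" "p > 0"
  shows "periodic_on f S"
proof -
  obtain n where "n > 0" "\<And>x. x \<in> S \<Longrightarrow> ((f ^^ p) ^^ n) x = x"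
    using assms(1) unfolding periodic_on_def by blast
  thus ?thesis using assms(2) by (intro periodic_onI[of "p * n"]) (auto simp: funpow_mult)
qed

lemma finite_order_iff_periodic_on_UNIV: "finite_order g \<longleftrightarrow> periodic_on g UNIV"
  by (auto simp: finite_order_def periodic_on_def nat_pow_AutT fun_eq_iff)

lemma periodic_on_sect:
  assumes "g \<in> tree_aut" "g u = u" "periodic_on (sect g u) W"
  shows "periodic_on g ((@) u ` W)"
  using assms(3) by (auto elim!: periodic_onE intro!: periodic_onI simp: funpow_fixed_append[OF assms(1,2)])

lemma periodic_on_UNIV_if_below_level:
  fixes g :: "'a list \<Rightarrow> 'a list"
  assumes g: "g \<in> tree_aut" and level: "periodic_on g {v @ w | v w. length v = m}"
  shows "periodic_on g UNIV"
proof -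
  obtain n where n: "n > 0" and fixed: "\<And>v w. length v = m \<Longrightarrow> (g ^^ n) (v @ w) = v @ w"
    using level by (auto elim!: periodic_onE)
  have "(g ^^ n) u = u" for u
  proof (cases "m \<le> length u")
    case True
    thus ?thesis using fixed[of "take m u" "drop m u"] by simp
  next
    case False
    define r where "r = replicate (m - length u) (undefined :: 'a)"
    have "(g ^^ n) (u @ r) = u @ r"
      using fixed[of "u @ r" "[]"] False by (simp add: r_def)
    thus ?thesis using tree_aut_take[OF funpow_tree_aut[OF g, of n], of u r] by simp
  qed
  thus ?thesis using n by (intro periodic_onI)
qed

lemma self_in_orbit_if_funpow_fixed: "n > 0 \<Longrightarrow> (f ^^ n) x = x \<Longrightarrow> x \<in> Orbits.orbit f x"
  unfolding orbit_altdef by (auto intro!: exI[of _ n])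

lemma orbitT_eq_orbit:
  assumes g: "g \<in> tree_aut" and n: "n > 0" and v: "(g ^^ n) v = v"
  shows "orbitT g v = Orbits.orbit g v"
proof -
  have v_orbit: "v \<in> Orbits.orbit g v" using n v by (rule self_in_orbit_if_funpow_fixed)
  have "(g [^]\<^bsub>AutT\<^esub> k) v \<in> range (\<lambda>j. (g ^^ j) v)" for k :: int
  proof (cases "k < 0")
    case False
    thus ?thesis by (simp add: int_pow_def2 nat_pow_AutT)
  next
    case True
    define j where "j = nat (- k)"
    \<comment> \<open>on the orbit of \<open>v\<close>, \<open>g\<^sup>-\<^sup>j\<close> agrees with the positive power \<open>g\<^bsup>jn - j\<^esup>\<close>\<close>
    have "(g ^^ (j + (j * n - j))) v = v"
      using funpow_mult_fixed[OF v, of j] n by (simp add: mult.commute)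
    hence "(g ^^ j) ((g ^^ (j * n - j)) v) = v" by (simp add: funpow_add)
    hence "inv_into UNIV (g ^^ j) v = (g ^^ (j * n - j)) v"
      using tree_aut_bij[OF funpow_tree_aut[OF g]] by (simp add: bij_is_inj inv_f_eq)
    thus ?thesis
      using True by (simp add: int_pow_def2 nat_pow_AutT inv_AutT funpow_tree_aut g j_def)
  qed
  moreover have "(g ^^ j) v = (g [^]\<^bsub>AutT\<^esub> int j) v" for j
    by (simp add: int_pow_int nat_pow_AutT)
  ultimately have "orbitT g v = {(g ^^ j) v | j. True}"
    unfolding orbitT_def by blast
  thus ?thesis using orbit_altdef_self_in[OF v_orbit] by simp
qed

lemma orbit_len_returns:
  assumes g: "g \<in> tree_aut" and n: "n > 0" and v: "(g ^^ n) v = v"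
  shows "finite (orbitT g v)" "orbit_len g v > 0" "(g ^^ orbit_len g v) v = v"
proof -
  have v_orbit: "v \<in> Orbits.orbit g v" using n v by (rule self_in_orbit_if_funpow_fixed)
  have "orbit_len g v = funpow_dist1 g v v"
    using card_image[OF inj_on_funpow_dist1[OF v_orbit]]
    by (simp add: orbit_len_def orbitT_eq_orbit[OF assms] orbit_conv_funpow_dist1[OF v_orbit])
  thus "finite (orbitT g v)" "orbit_len g v > 0" "(g ^^ orbit_len g v) v = v"
    using finite_orbit[OF v_orbit] funpow_dist1_prop[OF v_orbit] orbitT_eq_orbit[OF assms]
    by simp_all
qed

lemma subgroup_tree_aut: "subgroup H AutT \<Longrightarrow> h \<in> H \<Longrightarrow> h \<in> tree_aut"
  using subgroup.subset by fastforce

lemma id_in_subgroup: "subgroup H AutT \<Longrightarrow> id \<in> H"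
  using subgroup.one_closed by fastforce

lemma comp_in_subgroup: "subgroup H AutT \<Longrightarrow> g \<in> H \<Longrightarrow> h \<in> H \<Longrightarrow> h \<circ> g \<in> H"
  using subgroup.m_closed by fastforce

lemma inv_into_in_subgroup: "subgroup H AutT \<Longrightarrow> h \<in> H \<Longrightarrow> inv_into UNIV h \<in> H"
  using subgroup.m_inv_closed[of H AutT h] inv_AutT subgroup_tree_aut by fastforce

lemma funpow_in_subgroup: "subgroup H AutT \<Longrightarrow> h \<in> H \<Longrightarrow> h ^^ n \<in> H"
  by (induction n) (simp_all add: id_in_subgroup comp_in_subgroup)

lemma subgroup_generate_AutT: "S \<subseteq> tree_aut \<Longrightarrow> subgroup (generate AutT S) AutT"
  using group.generate_is_subgroup[OF group_AutT] by simp

section \<open>Sections outside a subgroup\<close>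

definition sections_outside ::
  "('x list \<Rightarrow> 'x list) set \<Rightarrow> ('x list \<Rightarrow> 'x list) \<Rightarrow> nat \<Rightarrow> 'x list set" where
  "sections_outside H g m = {v. length v = m \<and> sect g v \<notin> H}"

lemma sections_outside_inv_into:
  assumes H: "subgroup H AutT" and g: "g \<in> tree_aut"
  shows "sections_outside H (inv_into UNIV g) m \<subseteq> g ` sections_outside H g m"
proof
  fix v assume v: "v \<in> sections_outside H (inv_into UNIV g) m"
  define w where "w = inv_into UNIV g v"
  have gw: "g w = v" unfolding w_def by (meson g tree_aut_bij bij_inv_eq_iff)
  have "sect g w \<notin> H"
    using v inv_into_in_subgroup[OF H] sect_inv_into[OF g, of v]
    by (auto simp: sections_outside_def w_def)
  thus "v \<in> g ` sections_outside H g m"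
    using gw v tree_aut_length[OF g, of w] by (auto simp: sections_outside_def)
qed

lemma sections_outside_comp:
  assumes H: "subgroup H AutT" and g: "g \<in> tree_aut" and h: "h \<in> tree_aut"
  shows "sections_outside H (h \<circ> g) m
           \<subseteq> sections_outside H g m \<union> inv_into UNIV g ` sections_outside H h m"
proof
  fix v assume v: "v \<in> sections_outside H (h \<circ> g) m"
  show "v \<in> sections_outside H g m \<union> inv_into UNIV g ` sections_outside H h m"
  proof (cases "sect g v \<in> H")
    case True
    hence "g v \<in> sections_outside H h m"
      using v comp_in_subgroup[OF H] sect_comp[OF g h, of v] tree_aut_length[OF g, of v]
      by (auto simp: sections_outside_def)
    moreover have "v = inv_into UNIV g (g v)"
      using tree_aut_bij[OF g] by (simp add: bij_is_inj)
    ultimately show ?thesis by blast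
  next
    case False
    thus ?thesis using v by (simp add: sections_outside_def)
  qed
qed

lemma finite_sections_outside_generate:
  assumes H: "subgroup H AutT" and S: "S \<subseteq> tree_aut"
    and fin: "\<And>h. h \<in> S \<Longrightarrow> finite (sections_outside H h m)"
    and g: "g \<in> generate AutT S"
  shows "finite (sections_outside H g m)"
  using g
proof (induction rule: generate.induct)
  case one
  show ?case using id_in_subgroup[OF H] by (simp add: sections_outside_def flip: id_def)
next
  case (incl h)
  thus ?case by (rule fin)
next
  case (inv h)
  hence "h \<in> tree_aut" using S by blast
  thus ?case
    using finite_subset[OF sections_outside_inv_into[OF H] finite_imageI[OF fin[OF inv]]]
    by (simp add: inv_AutT)
next
  case (eng g h)
  hence "g \<in> tree_aut" "h \<in> tree_aut"
    using subgroup_tree_aut[OF subgroup_generate_AutT[OF S]] by blast+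
  hence "finite (sections_outside H (h \<circ> g) m)"
    using finite_subset[OF sections_outside_comp[OF H]] eng.IH by blast
  thus ?case unfolding mult_AutT .
qed

section \<open>Groups with almost all sections in a group of finite exponent\<close>

locale bounded_sections =
  fixes G H :: "('x list \<Rightarrow> 'x list) set" and e :: nat
  assumes subgroup_G: "subgroup G AutT"
    and sect_in_G: "g \<in> G \<Longrightarrow> sect g u \<in> G"
    and exponent_pos: "e > 0"
    and exponent: "h \<in> H \<Longrightarrow> h ^^ e = id"
    and finite_sections_outside: "g \<in> G \<Longrightarrow> finite (sections_outside H g m)"
    and periodic_on_level_one: "g \<in> G \<Longrightarrow> periodic_on g {v. length v = 1}"
begin

lemma G_tree_aut: "g \<in> G \<Longrightarrow> g \<in> tree_aut"
  using subgroup_tree_aut[OF subgroup_G] .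

lemma funpow_in_G: "g \<in> G \<Longrightarrow> g ^^ n \<in> G"
  using funpow_in_subgroup[OF subgroup_G] .

lemma first_return_section_in_G: "g \<in> G \<Longrightarrow> first_return_section g v \<in> G"
  by (simp add: first_return_section_def nat_pow_AutT funpow_in_G sect_in_G)

lemma periodic_on_extensions:
  assumes g: "g \<in> G" and n: "n > 0" and fixes_level: "\<And>v. length v = m \<Longrightarrow> (g ^^ n) v = v"
    and outside: "\<And>v. length v = m \<Longrightarrow> sect (g ^^ n) v \<notin> H \<Longrightarrow> periodic_on g ((@) v ` W)"
  shows "periodic_on g {v @ w | v w. length v = m \<and> w \<in> W}"
proof -
  let ?k = "g ^^ n"
  have k: "?k \<in> G" "?k \<in> tree_aut" using g funpow_in_G G_tree_aut by blast+
  have "periodic_on g (\<Union>v\<in>sections_outside H ?k m. (@) v ` W)"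
    using finite_sections_outside[OF k(1)] outside
    by (intro periodic_on_UN) (auto simp: sections_outside_def)
  moreover have "periodic_on ?k {v @ w | v w. length v = m \<and> sect ?k v \<in> H}"
    using funpow_fixed_append[OF k(2) fixes_level] exponent exponent_pos
    by (intro periodic_onI[of e]) auto
  hence "periodic_on g {v @ w | v w. length v = m \<and> sect ?k v \<in> H}"
    using periodic_on_funpow n by blast
  ultimately show ?thesis
    by (rule periodic_on_subset[OF periodic_on_Un]) (auto simp: sections_outside_def)
qed

lemma periodic_on_levels: "g \<in> G \<Longrightarrow> periodic_on g {v. length v \<le> m}"
proof (induction m arbitrary: g)
  case 0
  thus ?case using tree_aut_Nil[OF G_tree_aut] by (intro periodic_onI[of 1]) auto
next
  case (Suc m)
  obtain n where n: "n > 0" and fixes_level: "\<And>v. length v = 1 \<Longrightarrow> (g ^^ n) v = v"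
    using periodic_on_level_one[OF Suc.prems] unfolding periodic_on_def by blast
  have "periodic_on g {[]}"
    using tree_aut_Nil[OF G_tree_aut[OF Suc.prems]] by (intro periodic_onI[of 1]) auto
  moreover have "periodic_on g {v @ w | v w. length v = 1 \<and> w \<in> {w. length w \<le> m}}"
  proof (rule periodic_on_extensions[OF Suc.prems n fixes_level])
    fix v :: "'x list" assume v: "length v = 1"
    have "periodic_on (sect (g ^^ n) v) {w. length w \<le> m}"
      using Suc.IH funpow_in_G sect_in_G Suc.prems by blast
    hence "periodic_on (g ^^ n) ((@) v ` {w. length w \<le> m})"
      using periodic_on_sect funpow_tree_aut G_tree_aut Suc.prems fixes_level[OF v] by blast
    thus "periodic_on g ((@) v ` {w. length w \<le> m})"
      using periodic_on_funpow n by blast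
  qed
  moreover have "{v :: 'x list. length v \<le> Suc m}
      \<subseteq> {[]} \<union> {v @ w | v w. length v = 1 \<and> w \<in> {w. length w \<le> m}}"
  proof
    fix v :: "'x list" assume v: "v \<in> {v. length v \<le> Suc m}"
    show "v \<in> {[]} \<union> {v @ w | v w. length v = 1 \<and> w \<in> {w. length w \<le> m}}"
    proof (cases v)
      case (Cons x w)
      hence "v = [x] @ w" "length w \<le> m" using v by auto
      thus ?thesis by (intro UnI2 CollectI exI[of _ "[x]"] exI[of _ w]) simp
    qed simp
  qed
  ultimately show ?case by (rule periodic_on_subset[OF periodic_on_Un])
qed

lemma finite_order_if_first_returns_finite_order:
  assumes g: "g \<in> G"
    and first_returns: "\<And>v. length v = m \<Longrightarrow> finite (orbitT g v)
                           \<Longrightarrow> finite_order (first_return_section g v)"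
  shows "finite_order g"
proof -
  have gt: "g \<in> tree_aut" using G_tree_aut[OF g] .
  obtain n where n: "n > 0" and fixes_level: "\<And>v. length v = m \<Longrightarrow> (g ^^ n) v = v"
    using periodic_on_levels[OF g, of m] unfolding periodic_on_def by auto
  have "periodic_on g ((@) v ` UNIV)" if v: "length v = m" for v
  proof -
    note returns = orbit_len_returns[OF gt n fixes_level[OF v]]
    have "periodic_on (sect (g ^^ orbit_len g v) v) UNIV"
      using first_returns[OF v returns(1)]
      by (simp add: finite_order_iff_periodic_on_UNIV first_return_section_def nat_pow_AutT)
    hence "periodic_on (g ^^ orbit_len g v) ((@) v ` UNIV)"
      by (rule periodic_on_sect[OF funpow_tree_aut[OF gt] returns(3)])
    thus ?thesis using periodic_on_funpow returns(2) by blast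
  qed
  hence "periodic_on g {v @ w | v w. length v = m \<and> w \<in> UNIV}"
    using periodic_on_extensions[OF g n fixes_level] by blast
  hence "periodic_on g UNIV"
    using periodic_on_UNIV_if_below_level[OF gt] by simp
  thus ?thesis by (simp add: finite_order_iff_periodic_on_UNIV)
qed

end

section \<open>Constant spinal groups\<close>

locale cs =
  fixes z :: 'x and A B :: "('x list \<Rightarrow> 'x list) set"
  assumes CS_data: "CS_data z A B"
begin

abbreviation G where "G \<equiv> CS_group A B"

lemma subgroup_A: "subgroup A AutT"
  using CS_data by (simp add: CS_data_def)

lemma subgroup_B: "subgroup B AutT"
  using CS_data by (simp add: CS_data_def)

lemma directed_fixes_level_one: "b \<in> B \<Longrightarrow> b [x] = [x]"
  using CS_data by (auto simp: CS_data_def St1_def)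

lemma sect_directed_z: "b \<in> B \<Longrightarrow> sect b [z] = b"
  using CS_data by (simp add: CS_data_def)

lemma sect_directed_in_A: "b \<in> B \<Longrightarrow> x \<noteq> z \<Longrightarrow> sect b [x] \<in> A"
  using CS_data by (simp add: CS_data_def)

lemma rooted_A: "a \<in> A \<Longrightarrow> \<exists>\<rho>. a = rooted \<rho>"
  using CS_data unfolding CS_data_def by blast

lemma sect_rooted_Cons:
  assumes "a \<in> A"
  shows "sect a (x # u) = id"
  using rooted_A[OF assms] rooted_sect_Cons by auto

lemma sect_rooted_in_A: "a \<in> A \<Longrightarrow> sect a u \<in> A"
  using sect_rooted_Cons by (cases u) (auto simp: id_in_subgroup[OF subgroup_A])

lemma sect_directed_cases:
  assumes b: "b \<in> B"
  shows "sect b u \<in> A \<or> (\<exists>k. u = replicate k z \<and> sect b u = b)"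
proof (induction u)
  case Nil
  show ?case by (auto intro: exI[of _ 0])
next
  case (Cons x u)
  have sect_Cons: "sect b (x # u) = sect (sect b [x]) u" using sect_append[of b "[x]" u] by simp
  show ?case
  proof (cases "x = z")
    case True
    thus ?thesis using Cons sect_Cons sect_directed_z[OF b] by (auto intro: exI[of _ "Suc k" for k])
  qed (use sect_Cons sect_directed_in_A[OF b] sect_rooted_in_A in auto)
qed

lemma sect_directed_nontrivial:
  assumes b: "b \<in> B" and v: "sect b v \<noteq> id"
  shows "(\<exists>k. v = replicate k z) \<or> (\<exists>k x. v = replicate k z @ [x] \<and> sect b [x] \<noteq> id)"
  using v
proof (induction v)
  case Nil
  show ?case by (auto intro: exI[of _ 0])
next
  case (Cons x u)
  have sect_Cons: "sect b (x # u) = sect (sect b [x]) u" using sect_append[of b "[x]" u] by simp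
  show ?case
  proof (cases "x = z")
    case True
    hence "sect b (x # u) = sect b u" using sect_Cons sect_directed_z[OF b] by simp
    hence "sect b u \<noteq> id" using Cons.prems by metis
    from Cons.IH[OF this] show ?thesis
    proof (elim disjE exE conjE)
      fix k assume "u = replicate k z"
      thus ?thesis using True by (intro disjI1 exI[of _ "Suc k"]) simp
    next
      fix k y assume "u = replicate k z @ [y]" and y: "sect b [y] \<noteq> id"
      hence "x # u = replicate (Suc k) z @ [y]" using True by simp
      thus ?thesis using y by blast
    qed
  next
    case False
    hence "u = []"
      using Cons.prems sect_Cons sect_rooted_Cons[OF sect_directed_in_A[OF b False]]
      by (cases u) auto
    thus ?thesis using Cons.prems by (auto intro: exI[of _ 0])
  qed
qed

lemma A_union_B_tree_aut: "A \<union> B \<subseteq> tree_aut"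
  using subgroup_tree_aut[OF subgroup_A] subgroup_tree_aut[OF subgroup_B] by blast

lemma subgroup_G: "subgroup G AutT"
  unfolding CS_group_def using subgroup_generate_AutT[OF A_union_B_tree_aut] .

lemma A_subset_G: "A \<subseteq> G" and B_subset_G: "B \<subseteq> G"
  unfolding CS_group_def by (auto intro: generate.incl)

lemma sect_generator_in_G:
  assumes "h \<in> A \<union> B"
  shows "sect h w \<in> G"
proof (cases "h \<in> A")
  case True
  thus ?thesis using sect_rooted_in_A A_subset_G by blast
next
  case False
  hence "h \<in> B" using assms by blast
  thus ?thesis using sect_directed_cases[of h w] A_subset_G B_subset_G by auto
qed

lemma sect_in_G: "g \<in> G \<Longrightarrow> sect g u \<in> G"
  unfolding CS_group_def
proof (induction arbitrary: u rule: generate.induct)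
  case one
  show ?case using id_in_subgroup[OF subgroup_G] by (simp add: CS_group_def flip: id_def)
next
  case (incl h)
  thus ?case using sect_generator_in_G by (simp add: CS_group_def)
next
  case (inv h)
  hence h: "h \<in> tree_aut" using A_union_B_tree_aut by blast
  have "inv_into UNIV (sect h (inv_into UNIV h u)) \<in> G"
    using inv sect_generator_in_G inv_into_in_subgroup[OF subgroup_G] by blast
  thus ?case by (simp add: inv_AutT[OF h] sect_inv_into[OF h] CS_group_def)
next
  case (eng g h)
  hence "g \<in> tree_aut" "h \<in> tree_aut"
    using subgroup_tree_aut[OF subgroup_G] by (auto simp: CS_group_def)
  hence "sect (h \<circ> g) u = sect h (g u) \<circ> sect g u" by (rule sect_comp)
  moreover have "sect h (g u) \<circ> sect g u \<in> G"
    using eng.IH comp_in_subgroup[OF subgroup_G] by (simp add: CS_group_def)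
  ultimately show ?case by (simp only: mult_AutT CS_group_def)
qed

lemma level_one_action_in_A: "g \<in> G \<Longrightarrow> \<exists>a\<in>A. \<forall>x. g [x] = a [x]"
  unfolding CS_group_def
proof (induction rule: generate.induct)
  case one
  show ?case using id_in_subgroup[OF subgroup_A] by (intro bexI[of _ id]) auto
next
  case (incl h)
  show ?case
  proof (cases "h \<in> A")
    case False
    hence "h \<in> B" using incl by blast
    thus ?thesis
      using directed_fixes_level_one id_in_subgroup[OF subgroup_A] by (intro bexI[of _ id]) auto
  qed blast
next
  case (inv h)
  hence h: "h \<in> tree_aut" using A_union_B_tree_aut by blast
  show ?case
  proof (cases "h \<in> A")
    case True
    thus ?thesis using inv_into_in_subgroup[OF subgroup_A] by (auto simp: inv_AutT[OF h])
  next
    case False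
    hence "h \<in> B" using inv by blast
    hence "inv_into UNIV h [x] = [x]" for x
      using directed_fixes_level_one tree_aut_bij[OF h] by (simp add: bij_is_inj inv_f_eq)
    thus ?thesis
      using id_in_subgroup[OF subgroup_A] by (intro bexI[of _ id]) (auto simp: inv_AutT[OF h])
  qed
next
  case (eng g h)
  then obtain a a' where a: "a \<in> A" "a' \<in> A" "\<forall>x. g [x] = a [x]" "\<forall>x. h [x] = a' [x]"
    by blast
  have "(h \<circ> g) [x] = (a' \<circ> a) [x]" for x
    using tree_aut_length[OF subgroup_tree_aut[OF subgroup_A a(1)], of "[x]"] a(3,4)
    by (cases "a [x]") auto
  thus ?case using comp_in_subgroup[OF subgroup_A a(1,2)] by (intro bexI[of _ "a' \<circ> a"]) auto
qed

lemma periodic_on_level_one_if_periodic: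
  assumes perA: "periodic A" and g: "g \<in> G"
  shows "periodic_on g {v. length v = 1}"
proof -
  obtain a where a: "a \<in> A" and ga: "\<And>x. g [x] = a [x]"
    using level_one_action_in_A[OF g] by blast
  obtain p where p: "p > 0" "a ^^ p = id"
    using perA a by (auto simp: periodic_def finite_order_def nat_pow_AutT)
  have "(g ^^ n) [x] = (a ^^ n) [x]" for n x
  proof (induction n)
    case (Suc n)
    obtain y where "(a ^^ n) [x] = [y]"
      using tree_aut_length[OF funpow_tree_aut[OF subgroup_tree_aut[OF subgroup_A a]], of n "[x]"]
      by (cases "(a ^^ n) [x]") auto
    thus ?case using Suc ga by simp
  qed simp
  thus ?thesis using p by (intro periodic_onI[of p]) (auto simp: length_Suc_conv)
qed

lemma bounded_sections_if_directed:
  assumes perA: "periodic A" and H: "subgroup H AutT"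
    and e: "e > 0" and exponent: "\<And>h. h \<in> H \<Longrightarrow> h ^^ e = id"
    and directed: "\<And>b m. b \<in> B \<Longrightarrow> finite (sections_outside H b m)"
  shows "bounded_sections G H e"
proof (rule bounded_sections.intro)
  show "finite (sections_outside H g m)" if g: "g \<in> G" for g m
  proof (rule finite_sections_outside_generate[OF H A_union_B_tree_aut])
    fix h assume h: "h \<in> A \<union> B"
    show "finite (sections_outside H h m)"
    proof (cases "h \<in> A")
      case True
      hence "sect h v \<in> H" if "v \<noteq> []" for v
        using that sect_rooted_Cons id_in_subgroup[OF H] by (cases v) auto
      hence "sections_outside H h m \<subseteq> {[]}" by (auto simp: sections_outside_def)
      thus ?thesis by (rule finite_subset) simp
    qed (use h directed in blast)
  qed (use g in \<open>simp add: CS_group_def\<close>)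
qed (use subgroup_G sect_in_G e exponent periodic_on_level_one_if_periodic[OF perA] in auto)

lemma exists_bounded_sections:
  assumes perA: "periodic A" and fin: "finite_exponent A \<or> finite_support z B"
  shows "\<exists>H e. bounded_sections G H e"
  using fin
proof
  assume "finite_exponent A"
  then obtain e where e: "e > 0" "\<And>a. a \<in> A \<Longrightarrow> a ^^ e = id"
    by (auto simp: finite_exponent_def nat_pow_AutT)
  have "sections_outside A b m \<subseteq> {replicate m z}" if b: "b \<in> B" for b m
  proof
    fix v assume "v \<in> sections_outside A b m"
    then obtain k where "v = replicate k z" "length v = m"
      using sect_directed_cases[OF b, of v] by (auto simp: sections_outside_def)
    thus "v \<in> {replicate m z}" by simp
  qed
  hence "finite (sections_outside A b m)" if "b \<in> B" for b m
    using that finite_subset by blast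
  hence "bounded_sections G A e"
    by (intro bounded_sections_if_directed[OF perA subgroup_A e])
  thus ?thesis by blast
next
  assume support: "finite_support z B"
  have "finite (sections_outside {id} b m)" if b: "b \<in> B" for b m
  proof (rule finite_subset)
    show "sections_outside {id} b m
          \<subseteq> {replicate m z} \<union> (\<lambda>x. replicate (m - 1) z @ [x]) ` {x. sect b [x] \<noteq> id}"
    proof
      fix v assume "v \<in> sections_outside {id} b m"
      hence v: "length v = m" "sect b v \<noteq> id" by (auto simp: sections_outside_def)
      from sect_directed_nontrivial[OF b v(2)]
      show "v \<in> {replicate m z} \<union> (\<lambda>x. replicate (m - 1) z @ [x]) ` {x. sect b [x] \<noteq> id}"
        using v(1) by auto
    qed
    show "finite ({replicate m z} \<union> (\<lambda>x. replicate (m - 1) z @ [x]) ` {x. sect b [x] \<noteq> id})"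
      using support b by (simp add: finite_support_def)
  qed
  moreover have "subgroup {id} AutT"
    using group.triv_subgroup[OF group_AutT] by simp
  ultimately have "bounded_sections G {id} 1"
    by (intro bounded_sections_if_directed[OF perA]) auto
  thus ?thesis by blast
qed

end

theorem mainTheorem5:
  fixes z :: 'x and A B T :: "('x list \<Rightarrow> 'x list) set"
  assumes cs: "CS_data z A B"
    and perA: "periodic A"
    and fin: "finite_exponent A \<or> finite_support z B"
    and T_sub: "T \<subseteq> CS_group A B"
    and T_fin: "\<forall>t\<in>T. finite_order t"
    and hyp: "\<forall>g \<in> CS_group A B - A. \<exists>m::nat. \<forall>v. length v = m \<longrightarrow> finite (orbitT g v) \<longrightarrow>
               (syl A B (first_return_section g v) < syl A B g \<or> first_return_section g v \<in> T)"
  shows "periodic (CS_group A B)"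
proof -
  interpret cs z A B using cs by unfold_locales
  obtain H e where "bounded_sections G H e"
    using exists_bounded_sections[OF perA fin] by blast
  then interpret bounded_sections G H e .
  have "finite_order g" if "g \<in> G" for g
    using that
  proof (induction "syl A B g" arbitrary: g rule: less_induct)
    case less
    show ?case
    proof (cases "g \<in> A")
      case True
      thus ?thesis using perA by (simp add: periodic_def)
    next
      case False
      then obtain m where m: "\<forall>v. length v = m \<longrightarrow> finite (orbitT g v) \<longrightarrow>
          syl A B (first_return_section g v) < syl A B g \<or> first_return_section g v \<in> T"
        using hyp less.prems by blast
      show ?thesis
      proof (rule finite_order_if_first_returns_finite_order[OF less.prems])
        fix v :: "'x list" assume "length v = m" "finite (orbitT g v)"
        thus "finite_order (first_return_section g v)"
          using m less.hyps first_return_section_in_G[OF less.prems] T_fin by blast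
      qed
    qed
  qed
  thus ?thesis by (simp add: periodic_def)
qed

end
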